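(* Let $(S,+)$ be an infinite left weakly cancellative semigroup with no idempotent element, and let $\langle x_n\rangle_{n=1}^\infty$ be a sequence in $S$. Then there exists a sum subsystem $\langle y_n\rangle_{n=1}^\infty$ of $\langle x_n\rangle_{n=1}^\infty$ which satisfies finiteness of finite sums.
   Context: $S$ is left weakly cancellative if for all $a,b\in S$ the set $\{x\in S: a+x=b\}$ is finite; $e$ is idempotent if $e+e=e$. $\mathcal{P}_f(\mathbb{N})$ denotes the set of nonempty finite subsets of $\mathbb{N}=\{1,2,\dots\}$, and $\sum_{n\in H}x_n$ is the sum in increasing order of indices. A sequence $\langle y_n\rangle_{n=1}^\infty$ is a sum subsystem of $\langle x_n\rangle_{n=1}^\infty$ if there is a sequence $\langle H_n\rangle_{n=1}^\infty$ in $\mathcal{P}_f(\mathbb{N})$ with $\max H_n<\min H_{n+1}$ and $y_n=\sum_{t\in H_n}x_t$ for all $n$. A sequence $\langle y_n\rangle_{n=1}^\infty$ satisfies finiteness of finite sums if for all $H_1,H_2\in\mathcal{P}_f(\mathbb{N})$ with $\max H_1\neq\max H_2$ one has $\sum_{n\in H_1}y_n\neq\sum_{n\in H_2}y_n$. *)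

theory Defs
  imports Main
begin

fun lsum :: "('b \<Rightarrow> 'a::semigroup_add) \<Rightarrow> 'b list \<Rightarrow> 'a" where
  "lsum x [] = undefined"
| "lsum x [h] = x h"
| "lsum x (h # t) = x h + lsum x t"

definition fsum :: "(nat \<Rightarrow> 'a::semigroup_add) \<Rightarrow> nat set \<Rightarrow> 'a" where
  "fsum x H = lsum x (sorted_list_of_set H)"

definition Pf :: "nat set set" where
  "Pf = {H. finite H \<and> H \<noteq> {} \<and> H \<subseteq> {1..}}"

definition left_weakly_cancellative :: "'a::semigroup_add itself \<Rightarrow> bool" where
  "left_weakly_cancellative _ \<longleftrightarrow> (\<forall>a b::'a. finite {x. a + x = b})"

definition sum_subsystem :: "(nat \<Rightarrow> 'a::semigroup_add) \<Rightarrow> (nat \<Rightarrow> 'a) \<Rightarrow> bool" where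
  "sum_subsystem y x \<longleftrightarrow> (\<exists>H :: nat \<Rightarrow> nat set.
      (\<forall>n\<ge>1. H n \<in> Pf \<and> Max (H n) < Min (H (Suc n)) \<and> y n = fsum x (H n)))"

definition finiteness_of_finite_sums :: "(nat \<Rightarrow> 'a::semigroup_add) \<Rightarrow> bool" where
  "finiteness_of_finite_sums y \<longleftrightarrow> (\<forall>H1\<in>Pf. \<forall>H2\<in>Pf.
      Max H1 \<noteq> Max H2 \<longrightarrow> fsum y H1 \<noteq> fsum y H2)"

end

theory Submission
  imports Defs
begin

(* The blocks H_1 < H_2 < ... are chosen greedily. Let F be the finite set of all finite sums of
   y_1, ..., y_n. The next block sum y_{n+1} must avoid F and every solution z of a + z = b with
   a, b in F; by left weak cancellativity only finitely many values are excluded. A fresh block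
   exists because the block sums beyond any index are infinitely many: either x takes infinitely
   many values there, or some value v is taken infinitely often, and then all multiples of v are
   block sums, which are pairwise distinct since a finite monogenic semigroup contains an idempotent.
   Finally a finite sum of the y's with largest index n+1 is y_{n+1} or a + y_{n+1} with a in F,
   so it differs from every sum b in F. *)

lemma lsum_append_single: "xs \<noteq> [] \<Longrightarrow> lsum x (xs @ [i]) = lsum x xs + x i"
proof (induction xs rule: induct_list012)
  case (3 a b t)
  then show ?case by (cases "t @ [i]") (auto simp: add.assoc)
qed auto

lemma fsum_singleton [simp]: "fsum x {i} = x i"
  by (simp add: fsum_def)

lemma sorted_list_of_set_remove_Max:
  assumes "finite H" "H \<noteq> {}"
  shows "sorted_list_of_set H = sorted_list_of_set (H - {Max H}) @ [Max H]"
proof (rule sorted_distinct_set_unique)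
  show "sorted (sorted_list_of_set (H - {Max H}) @ [Max H])"
    using assms by (auto simp: sorted_append)
qed (use assms Max_in in auto)

lemma fsum_remove_Max:
  assumes "finite H" "H \<noteq> {}" "H \<noteq> {Max H}"
  shows "fsum x H = fsum x (H - {Max H}) + x (Max H)"
proof -
  have "H - {Max H} \<noteq> {}"
    using assms(2,3) by blast
  then have "sorted_list_of_set (H - {Max H}) \<noteq> []"
    using assms(1) by simp
  then show ?thesis
    unfolding fsum_def sorted_list_of_set_remove_Max[OF assms(1,2)]
    by (rule lsum_append_single)
qed

lemma fsum_cases_Max:
  assumes "H \<in> Pf"
  obtains "fsum y H = y (Max H)"
  | H' where "H' \<in> Pf" "Max H' < Max H" "fsum y H = fsum y H' + y (Max H)"
proof (cases "H = {Max H}")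
  case True
  then show ?thesis using that(1) fsum_singleton by metis
next
  case False
  have H: "finite H" "H \<noteq> {}" "H \<subseteq> {1..}"
    using assms by (auto simp: Pf_def)
  define H' where "H' = H - {Max H}"
  have "H' \<noteq> {}" "finite H'"
    using H False by (auto simp: H'_def)
  then have "H' \<in> Pf" "Max H' < Max H"
    using H by (auto simp: Pf_def H'_def intro: Max_in le_neq_implies_less)
  then show ?thesis
    using that(2) fsum_remove_Max[OF H(1,2) False] unfolding H'_def by blast
qed

fun suc_mult :: "nat \<Rightarrow> 'a::semigroup_add \<Rightarrow> 'a" where
  "suc_mult 0 v = v"
| "suc_mult (Suc n) v = suc_mult n v + v"

lemma suc_mult_add: "suc_mult m v + suc_mult n v = suc_mult (m + Suc n) v"
  by (induction n) (auto simp: add.assoc[symmetric])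

lemma suc_mult_periodic:
  assumes "suc_mult p v = suc_mult (p + d) v" "p \<le> n"
  shows "suc_mult (n + k * d) v = suc_mult n v"
proof (induction k)
  case (Suc k)
  have "suc_mult (m + d) v = suc_mult m v" if "p \<le> m" for m
    using that
  proof (induction m rule: nat_induct_at_least)
    case base
    then show ?case using assms(1) by simp
  next
    case (Suc m)
    then show ?case by simp
  qed
  then have "suc_mult ((n + k * d) + d) v = suc_mult (n + k * d) v"
    using assms(2) by simp
  then show ?case
    using Suc.IH by (simp add: algebra_simps)
qed simp

lemma inj_suc_mult:
  assumes "\<forall>e::'a::semigroup_add. e + e \<noteq> e"
  shows "inj (\<lambda>n. suc_mult n (v::'a))"
proof (rule injI, rule ccontr)
  fix m n assume eq: "suc_mult m v = suc_mult n v" and "m \<noteq> n"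
  obtain p d where period: "suc_mult p v = suc_mult (p + d) v" and "d \<ge> 1"
  proof (cases "m < n")
    case True
    then show ?thesis using that[of m "n - m"] eq by simp
  next
    case False
    then show ?thesis using that[of n "m - n"] eq \<open>m \<noteq> n\<close> by simp
  qed
  define N where "N = (p + 1) * d - 1"
  have "(p + 1) * 1 \<le> (p + 1) * d"
    using \<open>d \<ge> 1\<close> by (rule mult_le_mono2)
  then have N: "Suc N = (p + 1) * d" "p \<le> N"
    by (simp_all add: N_def)
  have "suc_mult N v + suc_mult N v = suc_mult (N + (p + 1) * d) v"
    using suc_mult_add N(1) by metis
  also have "\<dots> = suc_mult N v"
    using suc_mult_periodic[OF period N(2)] by blast
  finally show False
    using assms by blast
qed

lemma fsum_const:
  assumes "finite B" "card B = Suc n" "\<forall>i\<in>B. x i = v"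
  shows "fsum x B = suc_mult n v"
  using assms
proof (induction n arbitrary: B)
  case 0
  then obtain i where "B = {i}" by (auto simp: card_Suc_eq)
  then show ?case using 0 by simp
next
  case (Suc n)
  have "B \<noteq> {}" "card B \<noteq> card {Max B}"
    using Suc.prems(2) by auto
  then have "B \<noteq> {Max B}" "Max B \<in> B"
    using Suc.prems(1) by (metis, intro Max_in)
  then have "fsum x B = fsum x (B - {Max B}) + x (Max B)"
    using Suc.prems(1) \<open>B \<noteq> {}\<close> by (intro fsum_remove_Max)
  also have "\<dots> = suc_mult n v + v"
    using Suc \<open>Max B \<in> B\<close> by simp
  finally show ?case by simp
qed

lemma infinite_block_sums:
  fixes x :: "nat \<Rightarrow> 'a::semigroup_add"
  assumes "\<forall>e::'a. e + e \<noteq> e" "infinite J"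
  shows "infinite {fsum x H | H. finite H \<and> H \<noteq> {} \<and> H \<subseteq> J}" (is "infinite ?sums")
proof (cases "finite (x ` J)")
  case False
  have "x ` J \<subseteq> ?sums"
    by (force intro: exI[of _ "{_}"])
  then show ?thesis
    using False finite_subset by blast
next
  case True
  then obtain j where inf: "infinite {i \<in> J. x i = x j}"
    using pigeonhole_infinite[OF assms(2)] by blast
  have "range (\<lambda>n. suc_mult n (x j)) \<subseteq> ?sums"
  proof
    fix s assume "s \<in> range (\<lambda>n. suc_mult n (x j))"
    then obtain n where s: "s = suc_mult n (x j)" by blast
    obtain B where B: "finite B" "card B = Suc n" "B \<subseteq> {i \<in> J. x i = x j}"
      using infinite_arbitrarily_large[OF inf] by blast
    then have "fsum x B = s"
      using s by (auto intro: fsum_const)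
    then show "s \<in> ?sums"
      using B by force
  qed
  moreover have "infinite (range (\<lambda>n. suc_mult n (x j)))"
    using inj_suc_mult[OF assms(1)] finite_imageD by blast
  ultimately show ?thesis
    using finite_subset by blast
qed

definition forbidden :: "'a::semigroup_add set \<Rightarrow> 'a set" where
  "forbidden F = F \<union> {z. \<exists>a\<in>F. \<exists>b\<in>F. a + z = b}"

lemma forbidden_mono: "F \<subseteq> F' \<Longrightarrow> forbidden F \<subseteq> forbidden F'"
  unfolding forbidden_def by blast

lemma finite_forbidden:
  assumes "left_weakly_cancellative TYPE('a::semigroup_add)" "finite (F::'a set)"
  shows "finite (forbidden F)"
proof -
  have "{z. \<exists>a\<in>F. \<exists>b\<in>F. a + z = b} = (\<Union>a\<in>F. \<Union>b\<in>F. {z. a + z = b})"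
    by blast
  then show ?thesis
    using assms by (simp add: forbidden_def left_weakly_cancellative_def)
qed

lemma exists_block_avoiding:
  fixes x :: "nat \<Rightarrow> 'a::semigroup_add"
  assumes "left_weakly_cancellative TYPE('a)" "\<forall>e::'a. e + e \<noteq> e"
    and "infinite J" "finite F"
  shows "\<exists>H. finite H \<and> H \<noteq> {} \<and> H \<subseteq> J \<and> fsum x H \<notin> forbidden F"
proof -
  have "\<not> {fsum x H | H. finite H \<and> H \<noteq> {} \<and> H \<subseteq> J} \<subseteq> forbidden F"
    using infinite_block_sums[OF assms(2,3)] finite_forbidden[OF assms(1,4)] finite_subset
    by blast
  then show ?thesis by blast
qed

definition sums_upto :: "(nat \<Rightarrow> 'a::semigroup_add) \<Rightarrow> nat \<Rightarrow> 'a set" where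
  "sums_upto y n = fsum y ` {H \<in> Pf. Max H \<le> n}"

lemma sums_upto_0 [simp]: "sums_upto y 0 = {}"
proof -
  have "Max H \<ge> 1" if "H \<in> Pf" for H
    using that Max_in[of H] unfolding Pf_def by blast
  then show ?thesis
    unfolding sums_upto_def by fastforce
qed

lemma fsum_in_sums_upto: "H \<in> Pf \<Longrightarrow> Max H \<le> n \<Longrightarrow> fsum y H \<in> sums_upto y n"
  unfolding sums_upto_def by blast

lemma sums_upto_subset:
  assumes step: "\<And>n. F n \<union> {y (Suc n)} \<union> (\<lambda>a. a + y (Suc n)) ` F n \<subseteq> F (Suc n)"
  shows "sums_upto y n \<subseteq> F n"
proof (induction n)
  case 0
  then show ?case by simp
next
  case (Suc n)
  show ?case
  proof
    fix s assume "s \<in> sums_upto y (Suc n)"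
    then obtain H where H: "H \<in> Pf" "Max H \<le> Suc n" and s: "s = fsum y H"
      unfolding sums_upto_def by blast
    show "s \<in> F (Suc n)"
    proof (cases "Max H = Suc n")
      case True
      from H(1) show ?thesis
      proof (cases rule: fsum_cases_Max[where y = y])
        case 1
        then show ?thesis using True s step[of n] by auto
      next
        case (2 H')
        then have "fsum y H' \<in> F n"
          using True Suc.IH fsum_in_sums_upto[of H' n y] by auto
        then show ?thesis using 2 True s step[of n] by auto
      qed
    next
      case False
      then have "s \<in> F n"
        using H s Suc.IH fsum_in_sums_upto[of H n y] by auto
      then show ?thesis using step[of n] by auto
    qed
  qed
qed

lemma finiteness_of_finite_sums_if_fresh:
  assumes fresh: "\<And>n. y (Suc n) \<notin> forbidden (sums_upto y n)"
  shows "finiteness_of_finite_sums y"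
proof -
  have "fsum y H1 \<noteq> fsum y H2" if "H1 \<in> Pf" "H2 \<in> Pf" "Max H1 < Max H2" for H1 H2
  proof -
    obtain n where n: "Max H2 = Suc n"
      using \<open>Max H1 < Max H2\<close> by (cases "Max H2") auto
    have b: "fsum y H1 \<in> sums_upto y n"
      using that n by (intro fsum_in_sums_upto) auto
    from \<open>H2 \<in> Pf\<close> show ?thesis
    proof (cases rule: fsum_cases_Max[where y = y])
      case 1
      then show ?thesis using fresh[of n] b n by (auto simp: forbidden_def)
    next
      case (2 H')
      then have "fsum y H' \<in> sums_upto y n"
        using n by (intro fsum_in_sums_upto) auto
      then show ?thesis using 2 fresh[of n] b n by (auto simp: forbidden_def)
    qed
  qed
  then show ?thesis
    unfolding finiteness_of_finite_sums_def by (metis linorder_neqE_nat)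
qed

lemma sum_subsystem_of_blocks:
  assumes "\<And>n. finite (G n) \<and> G n \<noteq> {} \<and> G (Suc n) \<subseteq> {Max (G n)<..}"
  shows "sum_subsystem (\<lambda>n. fsum x (G n)) x"
  unfolding sum_subsystem_def
proof (intro exI[of _ G] allI impI conjI refl)
  fix n :: nat assume "n \<ge> 1"
  then have "G n \<subseteq> {Max (G (n - 1))<..}"
    using assms[of "n - 1"] by simp
  then show "G n \<in> Pf"
    using assms[of n] by (auto simp: Pf_def)
  show "Max (G n) < Min (G (Suc n))"
    using assms[of "Suc n"] assms[of n] Min_in by fastforce
qed

lemma exists_fresh_blocks:
  fixes x :: "nat \<Rightarrow> 'a::semigroup_add"
  assumes "left_weakly_cancellative TYPE('a)" "\<forall>e::'a. e + e \<noteq> e"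
  obtains G where "\<And>n. finite (G n) \<and> G n \<noteq> {} \<and> G (Suc n) \<subseteq> {Max (G n)<..}"
    and "\<And>n. fsum x (G (Suc n)) \<notin> forbidden (sums_upto (\<lambda>i. fsum x (G i)) n)"
proof -
  (* A state is the last block together with a finite set containing all finite sums of the block
     sums chosen so far. The initial block {0} is a dummy: subsystems are indexed from 1. *)
  define P :: "nat \<Rightarrow> nat set \<times> 'a set \<Rightarrow> bool" where
    "P n s \<longleftrightarrow> finite (fst s) \<and> fst s \<noteq> {} \<and> finite (snd s)" for n s
  define Q :: "nat \<Rightarrow> nat set \<times> 'a set \<Rightarrow> nat set \<times> 'a set \<Rightarrow> bool" where
    "Q n s s' \<longleftrightarrow> fst s' \<subseteq> {Max (fst s)<..} \<and> fsum x (fst s') \<notin> forbidden (snd s)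
       \<and> snd s' = snd s \<union> {fsum x (fst s')} \<union> (\<lambda>a. a + fsum x (fst s')) ` snd s" for n s s'
  have "\<exists>s'. P (Suc n) s' \<and> Q n s s'" if "P n s" for n s
  proof -
    have "finite (snd s)"
      using that unfolding P_def by simp
    then obtain H where "finite H" "H \<noteq> {}" "H \<subseteq> {Max (fst s)<..}" "fsum x H \<notin> forbidden (snd s)"
      using exists_block_avoiding[OF assms infinite_Ioi] by metis
    then have "P (Suc n) (H, snd s \<union> {fsum x H} \<union> (\<lambda>a. a + fsum x H) ` snd s)"
      and "Q n s (H, snd s \<union> {fsum x H} \<union> (\<lambda>a. a + fsum x H) ` snd s)"
      using that unfolding P_def Q_def by simp_all
    then show ?thesis by blast
  qed
  moreover have "P 0 ({0}, {})"
    unfolding P_def by simp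
  ultimately obtain f where f: "\<And>n. P n (f n) \<and> Q n (f n) (f (Suc n))"
    using dependent_nat_choice[of P Q] by blast
  define G where "G n = fst (f n)" for n
  have "sums_upto (\<lambda>i. fsum x (G i)) n \<subseteq> snd (f n)" for n
  proof (rule sums_upto_subset)
    show "snd (f n) \<union> {fsum x (G (Suc n))} \<union> (\<lambda>a. a + fsum x (G (Suc n))) ` snd (f n)
      \<subseteq> snd (f (Suc n))" for n
      using f[of n] unfolding Q_def G_def by simp
  qed
  then have "forbidden (sums_upto (\<lambda>i. fsum x (G i)) n) \<subseteq> forbidden (snd (f n))" for n
    by (rule forbidden_mono)
  moreover have "fsum x (G (Suc n)) \<notin> forbidden (snd (f n))"
    and "finite (G n) \<and> G n \<noteq> {} \<and> G (Suc n) \<subseteq> {Max (G n)<..}" for n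
    using f[of n] unfolding P_def Q_def G_def by simp_all
  ultimately show ?thesis
    using that by blast
qed

theorem lemma2p3:
  fixes x :: "nat \<Rightarrow> 'a::semigroup_add"
  assumes "infinite (UNIV :: 'a set)"
    and "left_weakly_cancellative TYPE('a)"
    and "\<forall>e::'a. e + e \<noteq> e"
  shows "\<exists>y. sum_subsystem y x \<and> finiteness_of_finite_sums y"
proof -
  obtain G where G: "\<And>n. finite (G n) \<and> G n \<noteq> {} \<and> G (Suc n) \<subseteq> {Max (G n)<..}"
    and fresh: "\<And>n. fsum x (G (Suc n)) \<notin> forbidden (sums_upto (\<lambda>i. fsum x (G i)) n)"
    using exists_fresh_blocks[where x = x, OF assms(2,3)] by metis
  have "sum_subsystem (\<lambda>n. fsum x (G n)) x"
    using G by (rule sum_subsystem_of_blocks)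
  moreover have "finiteness_of_finite_sums (\<lambda>n. fsum x (G n))"
    using fresh by (rule finiteness_of_finite_sums_if_fresh)
  ultimately show ?thesis by blast
qed

end
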